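(* Let $\Omega\subseteq\mathcal C(A)$ be a convex subshift over a finite alphabet $A$, and let $n,R\ge1$. (i) For any $R'$-ball $B\in\mathcal B_{R'}(\mathcal C)$ with $n<R'$ and any $\xi\in\mathcal C$: $\xi^{R'}=B$ if and only if $\phi_n(\xi)^{R'-n}=B^{[n]}$. (ii) $\mathcal B_R(\Omega^{[n]})=\{B^{[n]}:B\in\mathcal B_{R+n}(\Omega)\}$. (iii) If $\Omega$ is $R$-step and $n<R$, then $\Omega^{[n]}$ is $(R-n)$-step; in particular $\Omega^{[R-1]}$ is $1$-step.
   Context: Convex subshifts. Let $A$ be a finite alphabet, $\mathbb F=\mathbb F(A)$. $\mathcal C=\mathcal C(A)$ is the set of subsets $\xi\subseteq\mathbb F$ with $1\in\xi$ that are right-convex: whenever a reduced word $a_m^{\varepsilon_m}\cdots a_1^{\varepsilon_1}$ ($a_i\in A$, $\varepsilon_i=\pm1$) lies in $\xi$, so does $a_k^{\varepsilon_k}\cdots a_1^{\varepsilon_1}$ for all $k<m$; topology from $\{0,1\}^{\mathbb F}$. Full convex shift: partial action of $\mathbb F$ on $\mathcal C$ with domains $\mathcal C_\alpha=\{\xi:\alpha^{-1}\in\xi\}$, $\alpha.\xi=\xi\alpha^{-1}$ for $\alpha\in\xi$. A convex subshift is the restriction to a closed invariant $\Omega\subseteq\mathcal C$. An $n$-ball is $B\in\mathcal C$ with all $|\alpha|\le n$, together with radius $n$; $\xi^n=\{\alpha\in\xi:|\alpha|\le n\}$; $\mathcal B_n(\Omega)=\{\xi^n:\xi\in\Omega\}$.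 For an $n$-ball $B$, $\xi\not\equiv B$ means $(\alpha.\xi)^n\ne B$ for all $\alpha\in\xi$; $\Omega^{\mathcal F}=\{\xi\in\mathcal C:\xi\not\equiv B\ \forall B\in\mathcal F\}$. $\Omega$ is $R$-step if $\Omega=\Omega^{\mathcal F}$ for a finite set $\mathcal F$ of $R$-balls (equivalently, $\xi\in\mathcal C$ lies in $\Omega$ iff $(\alpha.\xi)^R\in\mathcal B_R(\Omega)$ for all $\alpha\in\xi$). $n$-ball subshift: for a convex subshift $\Omega$, let $A^{[n:\Omega]}$ be the finite set of formal symbols $[(a.\xi)^n\xleftarrow{a}\xi^n]$ with $\xi\in\Omega$, $a\in A$, $a\in\xi$ (a symbol $[B\xleftarrow{a}B']$ is determined by the triple $(B,a,B')$), and set $[B'\xleftarrow{a^{-1}}B]:=[B\xleftarrow{a}B']^{-1}$ in the free group $\mathbb F^{[n:\Omega]}=\mathbb F(A^{[n:\Omega]})$. For $\xi\in\mathcal C$ and $\alpha=s_m\cdots s_1\in\xi$ reduced ($s_i\in A\cup A^{-1}$), put $B_k=((s_k\cdots s_1).\xi)^n$ and $\phi_n(\xi,\alpha)=[B_m\xleftarrow{s_m}B_{m-1}]\cdots[B_1\xleftarrow{s_1}B_0]$, $\phi_n(\xi,1)=1$, $\phi_n(\xi)=\{\phi_n(\xi,\alpha):\alpha\in\xi\}$. The $n$-ball subshift $\theta^{[n]}$ is the restriction of the full convex shift on $A^{[n:\Omega]}$ to $\Omega^{[n]}:=\phi_n(\Omega)$. For an $R'$-ball $B\in\mathcal B_{R'}(\mathcal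 C)$ and $n<R'$, $B^{[n]}:=\phi_n(B)^{R'-n}=\{\phi_n(B,\alpha):\alpha\in B,|\alpha|\le R'-n\}$, regarded as an $(R'-n)$-ball. *)

theory Defs
  imports Main
begin

(* Letters of F(A): (a, True) = a, (a, False) = a^{-1}.
   A reduced word  s_m ... s_1  (s_1 rightmost) is stored as the list [s_1, ..., s_m],
   so the right-convex "prefixes" s_k ... s_1 are exactly  take k. *)
type_synonym 'a letter = "'a \<times> bool"
type_synonym 'a word = "'a letter list"

definition inv_letter :: "'a letter \<Rightarrow> 'a letter" where
  "inv_letter x = (fst x, \<not> snd x)"

fun reduced :: "'a word \<Rightarrow> bool" where
  "reduced (x # y # ys) = (y \<noteq> inv_letter x \<and> reduced (y # ys))"
| "reduced _ = True"

(* the free group F(A) as the set of reduced words over A *)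
definition FW :: "'a set \<Rightarrow> 'a word set" where
  "FW A = {w. reduced w \<and> fst ` set w \<subseteq> A}"

(* push a letter onto the right end of the word (head of the list), with cancellation *)
fun cons_red :: "'a letter \<Rightarrow> 'a word \<Rightarrow> 'a word" where
  "cons_red x [] = [x]"
| "cons_red x (y # ys) = (if y = inv_letter x then ys else x # y # ys)"

(* group product u * v in F *)
definition mult :: "'a word \<Rightarrow> 'a word \<Rightarrow> 'a word" where
  "mult u v = foldr cons_red v u"

definition inv_word :: "'a word \<Rightarrow> 'a word" where
  "inv_word w = rev (map inv_letter w)"

definition convex :: "'a word set \<Rightarrow> bool" where
  "convex \<xi> \<longleftrightarrow> (\<forall>w\<in>\<xi>. \<forall>k. take k w \<in> \<xi>)"

definition CC :: "'a set \<Rightarrow> 'a word set set" where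
  "CC A = {\<xi>. [] \<in> \<xi> \<and> \<xi> \<subseteq> FW A \<and> convex \<xi>}"

definition act :: "'a word \<Rightarrow> 'a word set \<Rightarrow> 'a word set" where
  "act \<alpha> \<xi> = (\<lambda>\<beta>. mult \<beta> (inv_word \<alpha>)) ` \<xi>"

(* closedness in the product topology of {0,1}^F (basic opens = cylinders on finite sets) *)
definition closed_C :: "'a set \<Rightarrow> 'a word set set \<Rightarrow> bool" where
  "closed_C A \<Omega> \<longleftrightarrow> (\<forall>\<xi>. \<xi> \<subseteq> FW A \<longrightarrow> \<xi> \<notin> \<Omega> \<longrightarrow>
      (\<exists>S. finite S \<and> (\<forall>\<eta>. \<eta> \<subseteq> FW A \<longrightarrow> \<eta> \<inter> S = \<xi> \<inter> S \<longrightarrow> \<eta> \<notin> \<Omega>)))"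

definition invariant :: "'a word set set \<Rightarrow> bool" where
  "invariant \<Omega> \<longleftrightarrow> (\<forall>\<xi>\<in>\<Omega>. \<forall>\<alpha>\<in>\<xi>. act \<alpha> \<xi> \<in> \<Omega>)"

definition convex_subshift :: "'a set \<Rightarrow> 'a word set set \<Rightarrow> bool" where
  "convex_subshift A \<Omega> \<longleftrightarrow> \<Omega> \<subseteq> CC A \<and> closed_C A \<Omega> \<and> invariant \<Omega>"

definition trunc :: "nat \<Rightarrow> 'a word set \<Rightarrow> 'a word set" where
  "trunc n \<xi> = {\<alpha> \<in> \<xi>. length \<alpha> \<le> n}"

definition balls :: "nat \<Rightarrow> 'a word set set \<Rightarrow> 'a word set set" where
  "balls n \<Omega> = trunc n ` \<Omega>"

definition is_ball :: "'a set \<Rightarrow> nat \<Rightarrow> 'a word set \<Rightarrow> bool" where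
  "is_ball A n B \<longleftrightarrow> B \<in> CC A \<and> (\<forall>\<alpha>\<in>B. length \<alpha> \<le> n)"

definition avoids :: "nat \<Rightarrow> 'a word set \<Rightarrow> 'a word set \<Rightarrow> bool" where
  "avoids n \<xi> B \<longleftrightarrow> (\<forall>\<alpha>\<in>\<xi>. trunc n (act \<alpha> \<xi>) \<noteq> B)"

definition Omega_F :: "'a set \<Rightarrow> nat \<Rightarrow> 'a word set set \<Rightarrow> 'a word set set" where
  "Omega_F A n Fs = {\<xi> \<in> CC A. \<forall>B\<in>Fs. avoids n \<xi> B}"

definition R_step :: "'a set \<Rightarrow> nat \<Rightarrow> 'a word set set \<Rightarrow> bool" where
  "R_step A R \<Omega> \<longleftrightarrow> (\<exists>Fs. finite Fs \<and> (\<forall>B\<in>Fs. is_ball A R B) \<and> \<Omega> = Omega_F A R Fs)"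

(* formal symbols [B <-a- B'] are the triples (B, a, B') *)
type_synonym 'a sym = "'a word set \<times> 'a \<times> 'a word set"

definition sym_alph :: "'a set \<Rightarrow> nat \<Rightarrow> 'a word set set \<Rightarrow> 'a sym set" where
  "sym_alph A n \<Omega> = {(trunc n (act [(a, True)] \<xi>), a, trunc n \<xi>) | \<xi> a.
       \<xi> \<in> \<Omega> \<and> a \<in> A \<and> [(a, True)] \<in> \<xi>}"

(* the letter [B <-s- B'] for s in A \<union> A^{-1}; [B' <-a^{-1}- B] := [B <-a- B']^{-1} *)
definition sym_letter :: "'a letter \<Rightarrow> 'a word set \<Rightarrow> 'a word set \<Rightarrow> 'a sym letter" where
  "sym_letter s B B' = (if snd s then ((B, fst s, B'), True) else ((B', fst s, B), False))"

(* phi_n(xi, alpha): the k-th letter (k = i+1) is [B_k <-s_k- B_{k-1}] *)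
definition phi :: "nat \<Rightarrow> 'a word set \<Rightarrow> 'a word \<Rightarrow> 'a sym word" where
  "phi n \<xi> \<alpha> = map (\<lambda>i. sym_letter (\<alpha> ! i)
        (trunc n (act (take (Suc i) \<alpha>) \<xi>)) (trunc n (act (take i \<alpha>) \<xi>))) [0..<length \<alpha>]"

definition phi_set :: "nat \<Rightarrow> 'a word set \<Rightarrow> 'a sym word set" where
  "phi_set n \<xi> = phi n \<xi> ` \<xi>"

definition ball_shift :: "nat \<Rightarrow> 'a word set set \<Rightarrow> 'a sym word set set" where
  "ball_shift n \<Omega> = phi_set n ` \<Omega>"

definition ball_lift :: "nat \<Rightarrow> nat \<Rightarrow> 'a word set \<Rightarrow> 'a sym word set" where
  "ball_lift n R' B = {phi n B \<alpha> | \<alpha>. \<alpha> \<in> B \<and> length \<alpha> \<le> R' - n}"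

end

theory Submission
  imports Defs
begin

text \<open>The coded word \<open>\<phi>\<^sub>n(\<xi>, \<alpha>)\<close> lists the \<open>n\<close>-balls of \<open>\<xi>\<close> along the path \<open>\<alpha>\<close>. Since every
  word of length at most \<open>R'\<close> is \<open>\<delta> \<alpha>\<close> with \<open>|\<alpha>| \<le> R' - n\<close> and \<open>|\<delta>| \<le> n\<close>, the \<open>(R' - n)\<close>-ball
  of \<open>\<phi>\<^sub>n(\<xi>)\<close> and the \<open>R'\<close>-ball of \<open>\<xi>\<close> determine each other, which is (i); (ii) is (i) applied
  to the points of \<open>\<Omega>\<close>.

  For (iii), \<open>\<Omega>\<^sup>[\<^sup>n\<^sup>]\<close> is cut out by forbidding the finitely many \<open>(R - n)\<close>-balls over the
  finite \<open>n\<close>-ball alphabet that do not occur in it. A configuration \<open>\<zeta>\<close> avoiding them looks,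
  around each of its vertices, like the coding of a point of \<open>\<Omega>\<close>. Neighbouring letters share
  an \<open>n\<close>-ball, so erasing the labels yields \<open>\<xi>\<close> with \<open>\<phi>\<^sub>n(\<xi>) = \<zeta>\<close>; by (i) every \<open>R\<close>-ball of \<open>\<xi>\<close>
  is an \<open>R\<close>-ball of \<open>\<Omega>\<close>, hence \<open>\<xi> \<in> \<Omega>\<close> as \<open>\<Omega>\<close> is \<open>R\<close>-step.\<close>

section \<open>Reduced words and the free group\<close>

lemma inv_letter_inv_letter [simp]: "inv_letter (inv_letter x) = x"
  by (simp add: inv_letter_def)

lemma fst_inv_letter [simp]: "fst (inv_letter x) = fst x"
  by (simp add: inv_letter_def)

lemma reduced_Cons: "reduced (x # ys) \<longleftrightarrow> reduced ys \<and> (ys \<noteq> [] \<longrightarrow> hd ys \<noteq> inv_letter x)"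
  by (cases ys) auto

lemma reduced_append:
  "reduced (xs @ ys) \<longleftrightarrow> reduced xs \<and> reduced ys \<and>
     (xs \<noteq> [] \<longrightarrow> ys \<noteq> [] \<longrightarrow> hd ys \<noteq> inv_letter (last xs))"
  by (induction xs) (auto simp: reduced_Cons)

lemma reduced_snoc: "reduced (xs @ [y]) \<longleftrightarrow> reduced xs \<and> (xs \<noteq> [] \<longrightarrow> y \<noteq> inv_letter (last xs))"
  by (simp add: reduced_append)

lemma reduced_take: "reduced xs \<Longrightarrow> reduced (take k xs)"
  by (metis append_take_drop_id reduced_append)

lemma reduced_drop: "reduced xs \<Longrightarrow> reduced (drop k xs)"
  by (metis append_take_drop_id reduced_append)

lemma reduced_if_reduced_map:
  assumes "\<And>x. f (inv_letter x) = inv_letter (f x)" "reduced (map f w)"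
  shows "reduced w"
  using assms(2)
proof (induction w rule: reduced.induct)
  case (1 x y ys)
  then show ?case using assms(1) by (metis list.simps(9) reduced.simps(1))
qed auto

lemma reduced_cons_red: "reduced z \<Longrightarrow> reduced (cons_red x z)"
  by (cases z) (auto simp: reduced_Cons)

lemma reduced_mult: "reduced u \<Longrightarrow> reduced (mult u v)"
  unfolding mult_def by (induction v) (auto simp: reduced_cons_red)

lemma cons_red_cancel: "reduced q \<Longrightarrow> cons_red x (cons_red (inv_letter x) q) = q"
  by (cases q rule: reduced.cases) auto

lemma foldr_cons_red_cons_red:
  assumes "reduced z" "reduced u"
  shows "foldr cons_red (cons_red x z) u = cons_red x (foldr cons_red z u)"
proof (cases z)
  case (Cons y zs)
  have "reduced (foldr cons_red zs u)"
    using assms reduced_mult unfolding mult_def by blast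
  then show ?thesis using Cons by (simp add: cons_red_cancel)
qed simp

lemma mult_assoc:
  assumes "reduced u" "reduced v"
  shows "mult (mult u v) w = mult u (mult v w)"
proof -
  have "foldr cons_red (foldr cons_red w v) u = foldr cons_red (w @ v) u"
  proof (induction w)
    case (Cons x w)
    have "reduced (foldr cons_red w v)" using assms reduced_mult unfolding mult_def by blast
    then show ?case using Cons assms by (simp add: foldr_cons_red_cons_red)
  qed simp
  then show ?thesis by (simp add: mult_def)
qed

lemma mult_Nil_right [simp]: "mult u [] = u"
  by (simp add: mult_def)

lemma mult_Nil_left [simp]: "reduced q \<Longrightarrow> mult [] q = q"
  unfolding mult_def by (induction q rule: reduced.induct) auto

lemma inv_word_inv_word [simp]: "inv_word (inv_word p) = p"
  by (simp add: inv_word_def rev_map comp_def)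

lemma length_inv_word [simp]: "length (inv_word p) = length p"
  by (simp add: inv_word_def)

lemma inv_word_eq_Nil_iff [simp]: "inv_word p = [] \<longleftrightarrow> p = []"
  by (simp add: inv_word_def)

lemma inv_word_Cons: "inv_word (x # p) = inv_word p @ [inv_letter x]"
  by (simp add: inv_word_def)

lemma mult_inv_letter_single: "mult [inv_letter t] [t] = []"
  by (simp add: mult_def)

lemma mult_inv_word_right: "mult p (inv_word p) = []"
  by (induction p) (simp_all add: mult_def inv_word_def foldr_append)

lemma mult_inv_word_left: "mult (inv_word p) p = []"
  using mult_inv_word_right[of "inv_word p"] by simp

lemma reduced_inv_word: "reduced p \<Longrightarrow> reduced (inv_word p)"
proof (induction p)
  case (Cons x p)
  have "p \<noteq> [] \<Longrightarrow> last (inv_word p) = inv_letter (hd p)"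
    by (simp add: inv_word_def last_rev hd_map)
  moreover have "p \<noteq> [] \<Longrightarrow> hd p \<noteq> inv_letter x"
    using Cons.prems by (simp add: reduced_Cons)
  moreover have "reduced (inv_word p)" using Cons by (simp add: reduced_Cons)
  ultimately show ?case
    by (simp add: inv_word_Cons reduced_snoc) (metis inv_letter_inv_letter)
qed (simp add: inv_word_def)

lemma inv_word_mult:
  assumes "reduced u" "reduced v"
  shows "inv_word (mult v u) = mult (inv_word u) (inv_word v)"
proof -
  let ?p = "mult v u" and ?q = "mult (inv_word u) (inv_word v)"
  have ru: "reduced (inv_word u)" "reduced (inv_word v)" using assms reduced_inv_word by auto
  have rp: "reduced ?p" using assms reduced_mult by blast
  have "mult ?p ?q = mult v (mult (mult u (inv_word u)) (inv_word v))"
    using assms ru by (simp add: mult_assoc)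
  then have pq: "mult ?p ?q = []" using ru by (simp add: mult_inv_word_right)
  have "inv_word ?p = mult (mult (inv_word ?p) ?p) ?q"
    using pq by (simp add: mult_assoc[OF reduced_inv_word[OF rp] rp])
  moreover have "reduced ?q" using ru reduced_mult by blast
  ultimately show ?thesis by (simp add: mult_inv_word_left)
qed

lemma mult_append_reduced: "reduced (v @ u) \<Longrightarrow> mult u v = v @ u"
proof (induction v)
  case (Cons x v)
  have "mult u v = v @ u" using Cons by (simp add: reduced_Cons)
  moreover have "v @ u \<noteq> [] \<Longrightarrow> hd (v @ u) \<noteq> inv_letter x"
    using Cons.prems by (simp add: reduced_Cons)
  ultimately show ?case by (cases "v @ u") (auto simp: mult_def)
qed (simp add: reduced_append)

lemma mult_single:
  assumes "reduced v"
  shows "mult [l] v = (if v \<noteq> [] \<and> last v = inv_letter l then butlast v else v @ [l])"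
proof (cases "v \<noteq> [] \<and> last v = inv_letter l")
  case True
  then obtain u where v: "v = u @ [inv_letter l]" by (metis append_butlast_last_id)
  have "mult [l] v = mult [l] (mult [inv_letter l] u)"
    using assms v mult_append_reduced by metis
  also have "\<dots> = mult (mult [l] [inv_letter l]) u"
    by (simp add: mult_assoc)
  also have "\<dots> = u"
    using assms v reduced_take[of v "length u"] by (simp add: mult_def[of "[l]"])
  finally show ?thesis using True v by simp
next
  case False
  then have "reduced (v @ [l])"
    using assms by (metis reduced_snoc inv_letter_inv_letter)
  then show ?thesis using False by (auto simp: mult_append_reduced)
qed

lemma mult_cancel_append:
  assumes "reduced (inv_word p @ u)" "reduced (v @ p)" "reduced (v @ u)"
  shows "mult (inv_word p @ u) (v @ p) = v @ u"
proof -
  have red: "reduced u" "reduced (inv_word p)" "reduced p" "reduced v"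
    using assms by (simp_all add: reduced_append)
  have "mult (inv_word p @ u) (v @ p) = mult (mult u (inv_word p)) (mult p v)"
    using assms by (simp add: mult_append_reduced)
  also have "\<dots> = mult u (mult (mult (inv_word p) p) v)"
    using red by (simp add: mult_assoc)
  also have "\<dots> = v @ u"
    using red assms(3) by (simp add: mult_inv_word_left mult_append_reduced)
  finally show ?thesis .
qed

lemma reduced_cancellation:
  "reduced u \<Longrightarrow> reduced v \<Longrightarrow>
     \<exists>p u' v'. u = inv_word p @ u' \<and> v = v' @ p \<and> reduced (v' @ u')"
proof (induction u arbitrary: v)
  case Nil
  then show ?case by (metis append.right_neutral inv_word_eq_Nil_iff)
next
  case (Cons x u)
  show ?case
  proof (cases "v \<noteq> [] \<and> last v = inv_letter x")
    case True
    then obtain v0 where v: "v = v0 @ [inv_letter x]" by (metis append_butlast_last_id)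
    then have "reduced v0" using Cons.prems reduced_append by blast
    moreover have "reduced u" using Cons.prems by (simp add: reduced_Cons)
    ultimately obtain p u' v' where "u = inv_word p @ u'" "v0 = v' @ p" "reduced (v' @ u')"
      using Cons.IH by blast
    then have "x # u = inv_word (p @ [inv_letter x]) @ u' \<and> v = v' @ (p @ [inv_letter x])"
      using v by (simp add: inv_word_def)
    then show ?thesis using \<open>reduced (v' @ u')\<close> by blast
  next
    case False
    then have "reduced (v @ x # u)"
      using Cons.prems by (auto simp: reduced_append)
    then show ?thesis by (metis append.right_neutral inv_word_eq_Nil_iff self_append_conv2)
  qed
qed

text \<open>In the Cayley tree, the geodesic from \<open>v\<close> to \<open>u v\<close> runs inside the union of the
  geodesics from \<open>1\<close> to \<open>v\<close> and from \<open>1\<close> to \<open>u v\<close>.\<close>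
lemma mult_take_prefix:
  assumes "reduced u" "reduced v"
  shows "(\<exists>j. mult (take k u) v = take j v) \<or> (\<exists>j. mult (take k u) v = take j (mult u v))"
proof -
  obtain p u' v' where u: "u = inv_word p @ u'" and v: "v = v' @ p" and r: "reduced (v' @ u')"
    using reduced_cancellation[OF assms] by blast
  show ?thesis
  proof (cases "k \<le> length p")
    case True
    define d where "d = drop (length p - k) p"
    have "take k u = inv_word d @ []"
      using True unfolding u d_def inv_word_def by (simp add: take_rev drop_map)
    moreover have v_split: "v = (v' @ take (length p - k) p) @ d"
      unfolding v d_def by simp
    moreover have "reduced (v' @ take (length p - k) p)" "reduced d"
      using assms(2) v_split by (metis reduced_append)+
    then have "reduced (inv_word d @ [])" "reduced ((v' @ take (length p - k) p) @ [])"
      by (simp_all add: reduced_inv_word)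
    ultimately have "mult (take k u) v = v' @ take (length p - k) p"
      using assms(2) v_split mult_cancel_append[of d "[]" "v' @ take (length p - k) p"] by simp
    also have "\<dots> = take (length v' + (length p - k)) v"
      unfolding v by simp
    finally show ?thesis by blast
  next
    case False
    have "mult u v = v' @ u'"
      using assms r u v by (simp add: mult_cancel_append)
    moreover have "take k u = inv_word p @ take (k - length p) u'"
      using False u by simp
    moreover have "reduced (v' @ take (k - length p) u')"
      using reduced_take[OF r, of "length v' + (k - length p)"] by simp
    ultimately have "mult (take k u) v = take (length v' + (k - length p)) (mult u v)"
      using assms u v by (simp add: mult_cancel_append reduced_append reduced_take)
    then show ?thesis by blast
  qed
qed

section \<open>The full convex shift\<close>

lemma FW_reduced: "u \<in> FW A \<Longrightarrow> reduced u"
  by (simp add: FW_def)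

lemma FW_single: "fst l \<in> A \<Longrightarrow> [l] \<in> FW A"
  by (simp add: FW_def)

lemma FW_take: "u \<in> FW A \<Longrightarrow> take k u \<in> FW A"
  unfolding FW_def using reduced_take[of u k] set_take_subset[of k u] by blast

lemma FW_drop: "u \<in> FW A \<Longrightarrow> drop k u \<in> FW A"
  unfolding FW_def using reduced_drop[of u k] set_drop_subset[of k u] by blast

lemma set_mult_subset: "set (mult u v) \<subseteq> set u \<union> set v"
proof -
  have "set (cons_red x z) \<subseteq> insert x (set z)" for x z
    by (cases z) auto
  then have "set (foldr cons_red v u) \<subseteq> set v \<union> set u"
    by (induction v) fastforce+
  then show ?thesis by (auto simp: mult_def)
qed

lemma length_mult_le: "length (mult u v) \<le> length u + length v"
  unfolding mult_def
proof (induction v)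
  case (Cons a v)
  have "length (cons_red a z) \<le> Suc (length z)" for z
    by (cases z) auto
  then have "length (cons_red a (foldr cons_red v u)) \<le> Suc (length (foldr cons_red v u))" .
  then show ?case using Cons.IH by simp
qed simp

lemma FW_mult: "u \<in> FW A \<Longrightarrow> v \<in> FW A \<Longrightarrow> mult u v \<in> FW A"
  using set_mult_subset[of u v] unfolding FW_def by (fastforce simp: reduced_mult)

lemma FW_inv_word: "u \<in> FW A \<Longrightarrow> inv_word u \<in> FW A"
  unfolding FW_def using reduced_inv_word[of u] by (auto simp: inv_word_def)

lemma CC_FW: "\<xi> \<in> CC A \<Longrightarrow> \<xi> \<subseteq> FW A"
  by (simp add: CC_def)

lemma convexD: "convex \<xi> \<Longrightarrow> w \<in> \<xi> \<Longrightarrow> take k w \<in> \<xi>"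
  by (simp add: convex_def)

lemma mem_act_iff:
  assumes "\<alpha> \<in> FW A" "\<xi> \<subseteq> FW A"
  shows "\<gamma> \<in> act \<alpha> \<xi> \<longleftrightarrow> \<gamma> \<in> FW A \<and> mult \<gamma> \<alpha> \<in> \<xi>"
proof
  assume "\<gamma> \<in> act \<alpha> \<xi>"
  then obtain \<beta> where \<beta>: "\<beta> \<in> \<xi>" "\<gamma> = mult \<beta> (inv_word \<alpha>)" by (auto simp: act_def)
  then have "\<beta> \<in> FW A" using assms by auto
  then have "\<gamma> \<in> FW A" using \<beta> assms FW_mult FW_inv_word by blast
  moreover have "mult \<gamma> \<alpha> = \<beta>" using \<beta> \<open>\<beta> \<in> FW A\<close> assms
    by (simp add: mult_assoc FW_def reduced_inv_word mult_inv_word_left)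
  ultimately show "\<gamma> \<in> FW A \<and> mult \<gamma> \<alpha> \<in> \<xi>" using \<beta> by simp
next
  assume \<gamma>: "\<gamma> \<in> FW A \<and> mult \<gamma> \<alpha> \<in> \<xi>"
  then have "mult (mult \<gamma> \<alpha>) (inv_word \<alpha>) = \<gamma>"
    using assms by (simp add: mult_assoc FW_def mult_inv_word_right)
  then show "\<gamma> \<in> act \<alpha> \<xi>" using \<gamma> unfolding act_def by (metis image_eqI)
qed

lemma act_subset_FW: "\<alpha> \<in> FW A \<Longrightarrow> \<xi> \<subseteq> FW A \<Longrightarrow> act \<alpha> \<xi> \<subseteq> FW A"
  using mem_act_iff by blast

lemma act_Nil [simp]: "act [] \<xi> = \<xi>"
  by (simp add: act_def inv_word_def)

lemma act_act:
  assumes "u \<in> FW A" "v \<in> FW A" "\<xi> \<subseteq> FW A"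
  shows "act v (act u \<xi>) = act (mult v u) \<xi>"
proof -
  have "mult (mult \<beta> (inv_word u)) (inv_word v) = mult \<beta> (inv_word (mult v u))" if "\<beta> \<in> \<xi>" for \<beta>
    using assms that by (auto simp: FW_def inv_word_mult mult_assoc reduced_inv_word)
  then show ?thesis by (auto simp: act_def image_image)
qed

lemma act_CC:
  assumes "\<xi> \<in> CC A" "\<beta> \<in> \<xi>"
  shows "act \<beta> \<xi> \<in> CC A"
proof -
  have \<xi>: "\<xi> \<subseteq> FW A" "convex \<xi>" "[] \<in> \<xi>" using assms(1) by (auto simp: CC_def)
  have \<beta>: "\<beta> \<in> FW A" using \<xi> assms by auto
  have "take k \<gamma> \<in> act \<beta> \<xi>" if "\<gamma> \<in> act \<beta> \<xi>" for \<gamma> k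
  proof -
    have \<gamma>: "\<gamma> \<in> FW A" "mult \<gamma> \<beta> \<in> \<xi>" using that mem_act_iff[OF \<beta> \<xi>(1)] by auto
    then have "mult (take k \<gamma>) \<beta> \<in> \<xi>"
      using mult_take_prefix[of \<gamma> \<beta> k] FW_reduced \<beta> assms(2) convexD[OF \<xi>(2)] by metis
    then show ?thesis using mem_act_iff[OF \<beta> \<xi>(1)] FW_take \<gamma> by blast
  qed
  moreover have "[] \<in> act \<beta> \<xi>"
    using mem_act_iff[OF \<beta> \<xi>(1)] \<beta> assms(2) by (simp add: FW_def)
  ultimately show ?thesis
    using act_subset_FW[OF \<beta> \<xi>(1)] by (auto simp: CC_def convex_def)
qed

section \<open>The \<open>n\<close>-ball coding \<open>\<phi>\<^sub>n\<close>\<close>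

text \<open>A letter of the \<open>n\<close>-ball alphabet is \<open>((B, a, B'), sign)\<close>; forgetting the balls leaves a
  letter of \<open>A\<close>.\<close>
definition base_letter :: "'a sym letter \<Rightarrow> 'a letter" where
  "base_letter l = (fst (snd (fst l)), snd l)"

lemma base_letter_sym_letter [simp]: "base_letter (sym_letter s B B') = s"
  by (cases s) (simp add: base_letter_def sym_letter_def)

lemma base_letter_inv_letter [simp]: "base_letter (inv_letter l) = inv_letter (base_letter l)"
  by (simp add: base_letter_def inv_letter_def)

lemma inv_letter_sym_letter: "inv_letter (sym_letter s B B') = sym_letter (inv_letter s) B' B"
  by (simp add: sym_letter_def inv_letter_def)

lemma sym_letter_eqD: "sym_letter s B C = sym_letter s B' C' \<Longrightarrow> B = B' \<and> C = C'"
  by (simp add: sym_letter_def split: if_splits)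

lemma length_phi [simp]: "length (phi n \<xi> \<alpha>) = length \<alpha>"
  by (simp add: phi_def)

lemma phi_Nil [simp]: "phi n \<xi> [] = []"
  by (simp add: phi_def)

lemma nth_phi: "i < length \<alpha> \<Longrightarrow> phi n \<xi> \<alpha> ! i =
    sym_letter (\<alpha> ! i) (trunc n (act (take (Suc i) \<alpha>) \<xi>)) (trunc n (act (take i \<alpha>) \<xi>))"
  by (simp add: phi_def)

lemma map_base_letter_phi [simp]: "map base_letter (phi n \<xi> \<alpha>) = \<alpha>"
  by (rule nth_equalityI) (auto simp: nth_phi)

lemma phi_eqD: "phi n \<xi> \<alpha> = phi n \<eta> \<beta> \<Longrightarrow> \<alpha> = \<beta>"
  by (metis map_base_letter_phi)

lemma take_phi: "take k (phi n \<xi> \<alpha>) = phi n \<xi> (take k \<alpha>)"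
  by (rule nth_equalityI) (auto simp: nth_phi min_less_iff_conj)

lemma phi_snoc: "phi n \<xi> (\<alpha> @ [s]) =
    phi n \<xi> \<alpha> @ [sym_letter s (trunc n (act (\<alpha> @ [s]) \<xi>)) (trunc n (act \<alpha> \<xi>))]"
  by (rule nth_equalityI) (auto simp: nth_phi nth_append less_Suc_eq)

lemma phi_single: "phi n \<xi> [l] = [sym_letter l (trunc n (act [l] \<xi>)) (trunc n \<xi>)]"
  using phi_snoc[of n \<xi> "[]" l] by simp

lemma last_phi:
  "\<alpha> \<noteq> [] \<Longrightarrow>
    last (phi n \<xi> \<alpha>) = sym_letter (last \<alpha>) (trunc n (act \<alpha> \<xi>)) (trunc n (act (butlast \<alpha>) \<xi>))"
  by (induction \<alpha> rule: rev_induct) (simp_all add: phi_snoc)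

lemma butlast_phi: "butlast (phi n \<xi> \<alpha>) = phi n \<xi> (butlast \<alpha>)"
  by (simp add: butlast_conv_take take_phi)

lemma reduced_phi: "reduced \<alpha> \<Longrightarrow> reduced (phi n \<xi> \<alpha>)"
  by (rule reduced_if_reduced_map[of base_letter]) auto

lemma phi_cong:
  "(\<And>i. i \<le> length \<alpha> \<Longrightarrow> trunc n (act (take i \<alpha>) \<xi>) = trunc n (act (take i \<alpha>) \<eta>)) \<Longrightarrow>
    phi n \<xi> \<alpha> = phi n \<eta> \<alpha>"
  by (rule nth_equalityI) (auto simp: nth_phi)

lemma trunc_act_eq_if_phi_eq:
  assumes "phi n \<xi> \<alpha> = phi n \<eta> \<alpha>" "\<alpha> \<noteq> []"
  shows "trunc n (act \<alpha> \<xi>) = trunc n (act \<alpha> \<eta>)"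
  using last_phi[OF assms(2), of n \<xi>] last_phi[OF assms(2), of n \<eta>] assms(1)
  by (metis sym_letter_eqD)

lemma trunc_subset: "trunc n X \<subseteq> X"
  by (auto simp: trunc_def)

lemma trunc_act_trunc:
  assumes "\<eta> \<subseteq> FW A" "\<alpha> \<in> FW A" "length \<alpha> + n \<le> R'"
  shows "trunc n (act \<alpha> (trunc R' \<eta>)) = trunc n (act \<alpha> \<eta>)"
proof -
  have "trunc R' \<eta> \<subseteq> FW A" using assms trunc_subset by blast
  moreover have "length (mult \<gamma> \<alpha>) \<le> R'" if "length \<gamma> \<le> n" for \<gamma>
    using length_mult_le[of \<gamma> \<alpha>] that assms(3) by linarith
  ultimately show ?thesis
    using mem_act_iff[OF assms(2)] assms(1) by (auto simp: trunc_def)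
qed

lemma phi_trunc:
  assumes "\<eta> \<subseteq> FW A" "\<alpha> \<in> FW A" "length \<alpha> + n \<le> R'"
  shows "phi n (trunc R' \<eta>) \<alpha> = phi n \<eta> \<alpha>"
  using assms by (intro phi_cong trunc_act_trunc) (auto simp: FW_take)

lemma ball_lift_trunc:
  assumes "\<eta> \<subseteq> FW A" "n \<le> R'"
  shows "ball_lift n R' (trunc R' \<eta>) = trunc (R' - n) (phi_set n \<eta>)"
proof -
  have "phi n (trunc R' \<eta>) \<alpha> = phi n \<eta> \<alpha>" if "\<alpha> \<in> \<eta>" "length \<alpha> \<le> R' - n" for \<alpha>
    using assms that by (intro phi_trunc[of _ A]) auto
  then show ?thesis using assms(2)
    unfolding ball_lift_def trunc_def phi_set_def by force
qed

section \<open>Balls of \<open>\<Omega>\<^sup>[\<^sup>n\<^sup>]\<close>\<close>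

lemma phi_set_trunc_eqD:
  assumes "trunc m (phi_set n \<xi>) = trunc m (phi_set n \<eta>)" "\<alpha> \<in> \<xi>" "length \<alpha> \<le> m"
  shows "\<alpha> \<in> \<eta> \<and> phi n \<xi> \<alpha> = phi n \<eta> \<alpha>"
proof -
  have "phi n \<xi> \<alpha> \<in> trunc m (phi_set n \<xi>)" using assms by (auto simp: trunc_def phi_set_def)
  then have "phi n \<xi> \<alpha> \<in> phi_set n \<eta>" using assms(1) trunc_subset by blast
  then show ?thesis unfolding phi_set_def using phi_eqD by (metis imageE)
qed

lemma trunc_subset_if_phi_set_trunc_eq:
  assumes "\<xi> \<in> CC A" "\<eta> \<in> CC A" "n < R'"
    and eq: "trunc (R' - n) (phi_set n \<xi>) = trunc (R' - n) (phi_set n \<eta>)"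
  shows "trunc R' \<xi> \<subseteq> \<eta>"
proof
  fix \<gamma> assume "\<gamma> \<in> trunc R' \<xi>"
  then have \<gamma>: "\<gamma> \<in> \<xi>" "length \<gamma> \<le> R'" by (auto simp: trunc_def)
  have FW: "\<xi> \<subseteq> FW A" "\<eta> \<subseteq> FW A" using assms CC_FW by auto
  show "\<gamma> \<in> \<eta>"
  proof (cases "length \<gamma> \<le> R' - n")
    case True
    then show ?thesis using phi_set_trunc_eqD[OF eq \<gamma>(1)] by blast
  next
    case False
    define \<alpha> where "\<alpha> = take (R' - n) \<gamma>"
    define \<delta> where "\<delta> = drop (R' - n) \<gamma>"
    have "\<alpha> \<in> \<xi>" using assms(1) \<gamma> convexD unfolding \<alpha>_def CC_def by blast
    then have "phi n \<xi> \<alpha> = phi n \<eta> \<alpha>"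
      using phi_set_trunc_eqD[OF eq] False unfolding \<alpha>_def by simp
    moreover have "\<alpha> \<noteq> []" using False assms(3) unfolding \<alpha>_def by auto
    ultimately have ball: "trunc n (act \<alpha> \<xi>) = trunc n (act \<alpha> \<eta>)"
      by (rule trunc_act_eq_if_phi_eq)
    have FW\<gamma>: "\<gamma> \<in> FW A" using \<gamma> FW by auto
    then have FW\<alpha>\<delta>: "\<alpha> \<in> FW A" "\<delta> \<in> FW A"
      unfolding \<alpha>_def \<delta>_def by (simp_all add: FW_take FW_drop)
    have \<delta>\<alpha>: "mult \<delta> \<alpha> = \<gamma>"
      using FW\<gamma> unfolding \<alpha>_def \<delta>_def FW_def by (simp add: mult_append_reduced)
    have "\<delta> \<in> trunc n (act \<alpha> \<xi>)"
      using mem_act_iff[OF FW\<alpha>\<delta>(1) FW(1)] FW\<alpha>\<delta> \<delta>\<alpha> \<gamma> unfolding \<delta>_def trunc_def by auto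
    then have "\<delta> \<in> act \<alpha> \<eta>" using ball trunc_subset by blast
    then show ?thesis using mem_act_iff[OF FW\<alpha>\<delta>(1) FW(2)] \<delta>\<alpha> by simp
  qed
qed

lemma trunc_eq_iff_phi_set_trunc_eq:
  assumes "B \<in> balls R' (CC A)" "n < R'" "\<xi> \<in> CC A"
  shows "trunc R' \<xi> = B \<longleftrightarrow> trunc (R' - n) (phi_set n \<xi>) = ball_lift n R' B"
proof -
  obtain \<eta> where \<eta>: "\<eta> \<in> CC A" "B = trunc R' \<eta>" using assms(1) by (auto simp: balls_def)
  have lift: "ball_lift n R' (trunc R' \<zeta>) = trunc (R' - n) (phi_set n \<zeta>)" if "\<zeta> \<in> CC A" for \<zeta>
    using ball_lift_trunc CC_FW that assms(2) by (metis less_imp_le)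
  show ?thesis
  proof
    assume "trunc R' \<xi> = B"
    then show "trunc (R' - n) (phi_set n \<xi>) = ball_lift n R' B" using lift assms(3) by metis
  next
    assume "trunc (R' - n) (phi_set n \<xi>) = ball_lift n R' B"
    then have "trunc R' \<xi> \<subseteq> \<eta>" "trunc R' \<eta> \<subseteq> \<xi>"
      using trunc_subset_if_phi_set_trunc_eq[OF assms(3) \<eta>(1) assms(2)]
        trunc_subset_if_phi_set_trunc_eq[OF \<eta>(1) assms(3) assms(2)] lift \<eta> by auto
    then show "trunc R' \<xi> = B" using \<eta>(2) by (auto simp: trunc_def)
  qed
qed

lemma balls_ball_shift:
  assumes "\<Omega> \<subseteq> CC A"
  shows "balls R (ball_shift n \<Omega>) = ball_lift n (R + n) ` balls (R + n) \<Omega>"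
proof -
  have "ball_lift n (R + n) (trunc (R + n) \<xi>) = trunc R (phi_set n \<xi>)" if "\<xi> \<in> \<Omega>" for \<xi>
    using ball_lift_trunc[of \<xi> A n "R + n"] that assms CC_FW by auto
  then show ?thesis
    unfolding balls_def ball_shift_def image_image by (metis (no_types, lifting) image_cong)
qed

section \<open>\<open>\<phi>\<^sub>n\<close> is a cocycle and intertwines the shifts\<close>

lemma phi_mult_single:
  assumes "fst l \<in> A" "\<beta> \<in> FW A" "\<xi> \<subseteq> FW A"
  shows "phi n \<xi> (mult [l] \<beta>) = mult (phi n (act \<beta> \<xi>) [l]) (phi n \<xi> \<beta>)"
proof -
  have red: "reduced \<beta>" "reduced (phi n \<xi> \<beta>)" using assms FW_reduced reduced_phi by blast+
  define L where "L = sym_letter l (trunc n (act (mult [l] \<beta>) \<xi>)) (trunc n (act \<beta> \<xi>))"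
  have "phi n (act \<beta> \<xi>) [l] = [L]"
    using act_act[OF assms(2) FW_single[OF assms(1)] assms(3)] by (simp add: L_def phi_single)
  moreover have "phi n \<xi> (mult [l] \<beta>) = mult [L] (phi n \<xi> \<beta>)"
  proof (cases "\<beta> \<noteq> [] \<and> last \<beta> = inv_letter l")
    case True
    then have m: "mult [l] \<beta> = butlast \<beta>" using mult_single[OF red(1)] by simp
    then have "last (phi n \<xi> \<beta>) = inv_letter L"
      using True last_phi[of \<beta> n \<xi>] by (simp add: L_def inv_letter_sym_letter)
    moreover have "phi n \<xi> \<beta> \<noteq> []" using True by (metis length_0_conv length_phi)
    ultimately show ?thesis using m mult_single[OF red(2)] by (simp add: butlast_phi)
  next
    case False
    then have m: "mult [l] \<beta> = \<beta> @ [l]" using mult_single[OF red(1), of l] by auto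
    have "\<not> (phi n \<xi> \<beta> \<noteq> [] \<and> last (phi n \<xi> \<beta>) = inv_letter L)"
    proof
      assume last_L: "phi n \<xi> \<beta> \<noteq> [] \<and> last (phi n \<xi> \<beta>) = inv_letter L"
      then have "base_letter (last (phi n \<xi> \<beta>)) = last \<beta>"
        using last_phi by (metis base_letter_sym_letter length_0_conv length_phi)
      then show False using last_L False by (simp add: L_def)
    qed
    then show ?thesis using m mult_single[OF red(2), of L] by (auto simp: L_def phi_snoc)
  qed
  ultimately show ?thesis by simp
qed

lemma phi_mult:
  assumes "\<gamma> \<in> FW A" "\<beta> \<in> FW A" "\<xi> \<subseteq> FW A"
  shows "phi n \<xi> (mult \<gamma> \<beta>) = mult (phi n (act \<beta> \<xi>) \<gamma>) (phi n \<xi> \<beta>)"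
  using assms
proof (induction \<gamma> arbitrary: \<beta> \<xi>)
  case Nil
  then show ?case using FW_reduced reduced_phi by (metis mult_Nil_left phi_Nil)
next
  case (Cons l \<gamma>)
  have l: "fst l \<in> A" "[l] \<in> FW A" using Cons.prems by (simp_all add: FW_def)
  have \<gamma>: "\<gamma> \<in> FW A" using Cons.prems(1) FW_drop[of "l # \<gamma>" A 1] by simp
  have l\<gamma>: "mult \<gamma> [l] = l # \<gamma>"
    using mult_append_reduced[of "[l]" \<gamma>] Cons.prems(1) by (simp add: FW_def)
  have l\<beta>: "mult [l] \<beta> \<in> FW A" using l Cons.prems FW_mult by blast
  have act_l\<beta>: "act (mult [l] \<beta>) \<xi> = act [l] (act \<beta> \<xi>)"
    using act_act[OF Cons.prems(2) l(2) Cons.prems(3)] by simp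
  have red: "reduced \<gamma>" using \<gamma> FW_reduced by blast
  then have red_phi: "reduced (phi n (act [l] (act \<beta> \<xi>)) \<gamma>)" "reduced (phi n (act \<beta> \<xi>) [l])"
    by (simp_all add: reduced_phi)
  have "phi n \<xi> (mult (l # \<gamma>) \<beta>) = phi n \<xi> (mult \<gamma> (mult [l] \<beta>))"
    using mult_assoc[of \<gamma> "[l]" \<beta>] red l\<gamma> by simp
  also have "\<dots> = mult (phi n (act [l] (act \<beta> \<xi>)) \<gamma>) (mult (phi n (act \<beta> \<xi>) [l]) (phi n \<xi> \<beta>))"
    using Cons.IH[OF \<gamma> l\<beta> Cons.prems(3)] phi_mult_single[OF l(1) Cons.prems(2,3)] act_l\<beta> by simp
  also have "\<dots> = mult (phi n (act \<beta> \<xi>) (l # \<gamma>)) (phi n \<xi> \<beta>)"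
    using Cons.IH[OF \<gamma> l(2) act_subset_FW[OF Cons.prems(2,3)]] l\<gamma> mult_assoc[OF red_phi] by simp
  finally show ?case .
qed

lemma act_phi_phi_set:
  assumes "\<xi> \<subseteq> FW A" "\<beta> \<in> \<xi>"
  shows "act (phi n \<xi> \<beta>) (phi_set n \<xi>) = phi_set n (act \<beta> \<xi>)"
proof -
  have \<beta>: "\<beta> \<in> FW A" "reduced \<beta>" using assms FW_reduced by auto
  have "mult (phi n \<xi> \<alpha>) (inv_word (phi n \<xi> \<beta>)) = phi n (act \<beta> \<xi>) (mult \<alpha> (inv_word \<beta>))"
    if "\<alpha> \<in> \<xi>" for \<alpha>
  proof -
    define \<gamma> where "\<gamma> = mult \<alpha> (inv_word \<beta>)"
    have \<gamma>: "\<gamma> \<in> FW A" using that mem_act_iff[OF \<beta>(1) assms(1)] unfolding \<gamma>_def act_def by blast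
    have "mult \<gamma> \<beta> = \<alpha>" unfolding \<gamma>_def
      using that assms(1) \<beta> mult_assoc[of \<alpha> "inv_word \<beta>" \<beta>]
      by (auto simp: FW_def reduced_inv_word mult_inv_word_left)
    then have "phi n \<xi> \<alpha> = mult (phi n (act \<beta> \<xi>) \<gamma>) (phi n \<xi> \<beta>)"
      using phi_mult[OF \<gamma> \<beta>(1) assms(1)] by simp
    moreover have "reduced (phi n (act \<beta> \<xi>) \<gamma>)" "reduced (phi n \<xi> \<beta>)"
      using FW_reduced[OF \<gamma>] \<beta> reduced_phi by auto
    ultimately show ?thesis unfolding \<gamma>_def by (simp add: mult_assoc mult_inv_word_right)
  qed
  then have "(\<lambda>\<alpha>. mult (phi n \<xi> \<alpha>) (inv_word (phi n \<xi> \<beta>))) ` \<xi> =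
      (\<lambda>\<alpha>. phi n (act \<beta> \<xi>) (mult \<alpha> (inv_word \<beta>))) ` \<xi>"
    by (rule image_cong[OF refl])
  then show ?thesis by (simp add: act_def[of "phi n \<xi> \<beta>"] act_def[of \<beta>] phi_set_def image_image)
qed

lemma single_mem_phi_set_iff:
  "[t] \<in> phi_set n \<theta> \<longleftrightarrow> (\<exists>s. [s] \<in> \<theta> \<and> t = sym_letter s (trunc n (act [s] \<theta>)) (trunc n \<theta>))"
proof
  assume "[t] \<in> phi_set n \<theta>"
  then obtain x where x: "x \<in> \<theta>" "phi n \<theta> x = [t]" by (auto simp: phi_set_def)
  then obtain s where "x = [s]" by (metis length_phi length_Suc_conv length_0_conv)
  moreover have "t = sym_letter s (trunc n (act [s] \<theta>)) (trunc n \<theta>)"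
    using x(2) \<open>x = [s]\<close> by (simp add: phi_single)
  ultimately show "\<exists>s. [s] \<in> \<theta> \<and> t = sym_letter s (trunc n (act [s] \<theta>)) (trunc n \<theta>)"
    using x(1) by blast
next
  assume "\<exists>s. [s] \<in> \<theta> \<and> t = sym_letter s (trunc n (act [s] \<theta>)) (trunc n \<theta>)"
  then show "[t] \<in> phi_set n \<theta>" unfolding phi_set_def by (metis image_eqI phi_single)
qed

lemma sym_alph_memI:
  "\<theta> \<in> \<Omega> \<Longrightarrow> a \<in> A \<Longrightarrow> [(a, True)] \<in> \<theta> \<Longrightarrow>
    (trunc n (act [(a, True)] \<theta>), a, trunc n \<theta>) \<in> sym_alph A n \<Omega>"
  unfolding sym_alph_def by blast

lemma sym_letter_in_sym_alph:
  assumes "invariant \<Omega>" "\<Omega> \<subseteq> CC A" "\<xi> \<in> \<Omega>" "u \<in> \<xi>" "mult [s] u \<in> \<xi>" "fst s \<in> A"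
  shows "fst (sym_letter s (trunc n (act (mult [s] u) \<xi>)) (trunc n (act u \<xi>))) \<in> sym_alph A n \<Omega>"
proof -
  have FW: "\<xi> \<subseteq> FW A" "u \<in> FW A" "mult [s] u \<in> FW A" "[s] \<in> FW A" "[inv_letter s] \<in> FW A"
    using assms CC_FW FW_single[of s A] FW_single[of "inv_letter s" A] by auto
  have "mult [inv_letter s] (mult [s] u) = mult (mult [inv_letter s] [s]) u"
    by (simp add: mult_assoc)
  then have cancel: "mult [inv_letter s] (mult [s] u) = u"
    using FW_reduced[OF FW(2)] by (simp add: mult_inv_letter_single)
  have shifted: "act u \<xi> \<in> \<Omega>" "act (mult [s] u) \<xi> \<in> \<Omega>"
    using assms(1,3,4,5) unfolding invariant_def by auto
  show ?thesis
  proof (cases "snd s")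
    case True
    then obtain a where s: "s = (a, True)" by (cases s) simp
    have "[s] \<in> act u \<xi>" "act [s] (act u \<xi>) = act (mult [s] u) \<xi>"
      using mem_act_iff[OF FW(2,1)] act_act[OF FW(2,4,1)] FW assms(5) by auto
    then show ?thesis
      using sym_alph_memI[OF shifted(1), of a A n] assms(6) s by (simp add: sym_letter_def)
  next
    case False
    then obtain a where s: "s = (a, False)" by (cases s) simp
    have "[inv_letter s] \<in> act (mult [s] u) \<xi>" "act [inv_letter s] (act (mult [s] u) \<xi>) = act u \<xi>"
      using mem_act_iff[OF FW(3,1)] act_act[OF FW(3,5,1)] FW cancel assms(4) by auto
    then show ?thesis
      using sym_alph_memI[OF shifted(2), of a A n] assms(6) s by (simp add: sym_letter_def inv_letter_def)
  qed
qed

lemma phi_set_CC: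
  assumes "\<Omega> \<subseteq> CC A" "invariant \<Omega>" "\<xi> \<in> \<Omega>"
  shows "phi_set n \<xi> \<in> CC (sym_alph A n \<Omega>)"
proof -
  have \<xi>: "\<xi> \<subseteq> FW A" "convex \<xi>" "[] \<in> \<xi>" using assms by (auto simp: CC_def)
  have letters: "fst (phi n \<xi> \<alpha> ! i) \<in> sym_alph A n \<Omega>" if "\<alpha> \<in> \<xi>" "i < length \<alpha>" for \<alpha> i
  proof -
    have "take (Suc i) \<alpha> = mult [\<alpha> ! i] (take i \<alpha>)"
      using that \<xi>(1) reduced_take[of \<alpha> "Suc i"] mult_append_reduced FW_reduced
      by (metis subsetD take_Suc_conv_app_nth)
    moreover have "take (Suc i) \<alpha> \<in> \<xi>" "take i \<alpha> \<in> \<xi>" using convexD[OF \<xi>(2) that(1)] by auto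
    moreover have "fst (\<alpha> ! i) \<in> A" using that \<xi>(1) nth_mem by (fastforce simp: FW_def)
    ultimately show ?thesis
      using sym_letter_in_sym_alph[OF assms(2,1,3), of "take i \<alpha>" "\<alpha> ! i" n] that(2)
      by (simp add: nth_phi)
  qed
  have "phi n \<xi> \<alpha> \<in> FW (sym_alph A n \<Omega>)" if "\<alpha> \<in> \<xi>" for \<alpha>
  proof -
    have "reduced (phi n \<xi> \<alpha>)" using that \<xi>(1) FW_reduced reduced_phi by blast
    moreover have "\<forall>x\<in>set (phi n \<xi> \<alpha>). fst x \<in> sym_alph A n \<Omega>"
      using letters[OF that] by (metis in_set_conv_nth length_phi)
    ultimately show ?thesis by (auto simp: FW_def)
  qed
  moreover have "convex (phi_set n \<xi>)"
    unfolding convex_def phi_set_def using convexD[OF \<xi>(2)] by (auto simp: take_phi)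
  moreover have "[] \<in> phi_set n \<xi>" using \<xi>(3) unfolding phi_set_def by (metis image_eqI phi_Nil)
  ultimately show ?thesis unfolding CC_def phi_set_def by auto
qed

section \<open>Reconstructing a configuration from its \<open>n\<close>-ball coding\<close>

lemma Omega_F_memI:
  assumes "\<Omega> = Omega_F A R Fs" "\<xi> \<in> CC A" "\<And>\<alpha>. \<alpha> \<in> \<xi> \<Longrightarrow> trunc R (act \<alpha> \<xi>) \<in> balls R \<Omega>"
  shows "\<xi> \<in> \<Omega>"
proof -
  have "trunc R (act \<alpha> \<xi>) \<noteq> B" if \<alpha>: "\<alpha> \<in> \<xi>" and B: "B \<in> Fs" for \<alpha> B
  proof -
    obtain \<theta> where \<theta>: "\<theta> \<in> \<Omega>" "trunc R (act \<alpha> \<xi>) = trunc R \<theta>"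
      using assms(3)[OF \<alpha>] by (auto simp: balls_def)
    then have "[] \<in> \<theta>" "avoids R \<theta> B" using assms(1) B by (auto simp: Omega_F_def CC_def)
    then show ?thesis using \<theta>(2) unfolding avoids_def by force
  qed
  then show ?thesis using assms(1,2) by (simp add: Omega_F_def avoids_def)
qed

text \<open>Let \<open>\<zeta>\<close> be a configuration over the \<open>n\<close>-ball alphabet all of whose \<open>(R - n)\<close>-balls are
  balls of \<open>\<Omega>\<^sup>[\<^sup>n\<^sup>]\<close>: around each \<open>w \<in> \<zeta>\<close> it looks like \<open>\<phi>\<^sub>n(\<theta>\<^sub>w)\<close> for some \<open>\<theta>\<^sub>w \<in> \<Omega>\<close> (\<open>witness w\<close>).
  Erasing the ball labels gives \<open>\<xi> = \<pi>(\<zeta>)\<close> (\<open>proj\<close>), and since a letter of \<open>\<zeta>\<close> at \<open>w\<close> already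
  records the \<open>n\<close>-balls of \<open>\<theta>\<^sub>w\<close> at both of its ends, these witnesses glue together:
  the \<open>n\<close>-ball of \<open>\<xi>\<close> at \<open>\<pi>(w)\<close> is that of \<open>\<theta>\<^sub>w\<close>.  Hence \<open>\<phi>\<^sub>n(\<xi>) = \<zeta>\<close>, and by
  \<open>trunc_eq_iff_phi_set_trunc_eq\<close> the \<open>R\<close>-balls of \<open>\<xi>\<close> are those of the \<open>\<theta>\<^sub>w\<close>.\<close>
locale ball_shift_reconstruction =
  fixes A :: "'a set" and \<Omega> :: "'a word set set" and n R :: nat
    and A' :: "'a sym set" and \<zeta> :: "'a sym word set"
  assumes Omega_CC: "\<Omega> \<subseteq> CC A" and n_less_R: "n < R"
    and base_in_A: "\<And>x. x \<in> A' \<Longrightarrow> fst (snd x) \<in> A"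
    and zeta_CC: "\<zeta> \<in> CC A'"
    and local_balls: "\<And>w. w \<in> \<zeta> \<Longrightarrow> \<exists>\<theta>\<in>\<Omega>. trunc (R - n) (act w \<zeta>) = trunc (R - n) (phi_set n \<theta>)"
begin

definition witness :: "'a sym word \<Rightarrow> 'a word set" where
  "witness w = (SOME \<theta>. \<theta> \<in> \<Omega> \<and> trunc (R - n) (act w \<zeta>) = trunc (R - n) (phi_set n \<theta>))"

definition proj :: "'a word set" where
  "proj = map base_letter ` \<zeta>"

lemma witness_spec:
  "w \<in> \<zeta> \<Longrightarrow> witness w \<in> \<Omega> \<and> trunc (R - n) (act w \<zeta>) = trunc (R - n) (phi_set n (witness w))"
  unfolding witness_def using local_balls by (rule someI2_bex) auto

lemma witness_CC: "w \<in> \<zeta> \<Longrightarrow> witness w \<in> CC A"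
  using witness_spec Omega_CC by blast

lemma witness_FW: "w \<in> \<zeta> \<Longrightarrow> witness w \<subseteq> FW A"
  using witness_CC CC_FW by blast

lemma zeta_FW: "\<zeta> \<subseteq> FW A'" and convex_zeta: "convex \<zeta>" and Nil_in_zeta: "[] \<in> \<zeta>"
  using zeta_CC by (auto simp: CC_def)

lemma mem_zeta_reduced: "w \<in> \<zeta> \<Longrightarrow> reduced w"
  using zeta_FW FW_reduced by blast

lemma single_mem_act_zeta_iff: "w \<in> \<zeta> \<Longrightarrow> [t] \<in> act w \<zeta> \<longleftrightarrow> fst t \<in> A' \<and> mult [t] w \<in> \<zeta>"
  using mem_act_iff[OF subsetD[OF zeta_FW] zeta_FW, of w "[t]"] by (simp add: FW_def)

lemma single_mem_act_zeta_iff_witness: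
  assumes "w \<in> \<zeta>"
  shows "[t] \<in> act w \<zeta> \<longleftrightarrow>
    (\<exists>s. [s] \<in> witness w \<and> t = sym_letter s (trunc n (act [s] (witness w))) (trunc n (witness w)))"
proof -
  have "length [t] \<le> R - n" using n_less_R by simp
  then have "[t] \<in> act w \<zeta> \<longleftrightarrow> [t] \<in> trunc (R - n) (act w \<zeta>)"
    "[t] \<in> phi_set n (witness w) \<longleftrightarrow> [t] \<in> trunc (R - n) (phi_set n (witness w))"
    by (simp_all add: trunc_def)
  then have "[t] \<in> act w \<zeta> \<longleftrightarrow> [t] \<in> phi_set n (witness w)"
    using witness_spec[OF assms] by simp
  then show ?thesis by (simp add: single_mem_phi_set_iff)
qed

lemma witness_letter:
  assumes "w \<in> \<zeta>" "[t] \<in> act w \<zeta>"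
  shows "[base_letter t] \<in> witness w"
    and "t = sym_letter (base_letter t) (trunc n (act [base_letter t] (witness w))) (trunc n (witness w))"
  using single_mem_act_zeta_iff_witness[OF assms(1)] assms(2) by (metis base_letter_sym_letter)+

lemma letter_eq_if_base_letter_eq:
  assumes "w \<in> \<zeta>" "[t1] \<in> act w \<zeta>" "[t2] \<in> act w \<zeta>" "base_letter t1 = base_letter t2"
  shows "t1 = t2"
  using witness_letter(2)[OF assms(1,2)] witness_letter(2)[OF assms(1,3)] assms(4) by metis

text \<open>The letter from \<open>w\<close> to \<open>t w\<close> is read in both witnesses \<open>\<theta>\<^sub>w\<close> and \<open>\<theta>\<^sub>t\<^sub>w\<close>; comparing the
  two readings identifies their \<open>n\<close>-balls.\<close>
lemma witness_step:
  assumes w: "w \<in> \<zeta>" and t: "[t] \<in> act w \<zeta>"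
  shows "trunc n (witness (mult [t] w)) = trunc n (act [base_letter t] (witness w))"
proof -
  define w' where "w' = mult [t] w"
  have w': "w' \<in> \<zeta>" and "fst t \<in> A'" using single_mem_act_zeta_iff[OF w] t w'_def by auto
  moreover have "mult [inv_letter t] w' = w"
    unfolding w'_def using mult_assoc[of "[inv_letter t]" "[t]" w] mem_zeta_reduced[OF w]
    by (simp add: mult_inv_letter_single)
  ultimately have "[inv_letter t] \<in> act w' \<zeta>" using single_mem_act_zeta_iff[OF w'] w by simp
  from witness_letter(2)[OF w' this] have "inv_letter t = sym_letter (inv_letter (base_letter t))
      (trunc n (act [inv_letter (base_letter t)] (witness w'))) (trunc n (witness w'))" by simp
  moreover have "inv_letter t = sym_letter (inv_letter (base_letter t))
      (trunc n (witness w)) (trunc n (act [base_letter t] (witness w)))"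
    using witness_letter(2)[OF w t] by (metis inv_letter_sym_letter)
  ultimately show ?thesis unfolding w'_def using sym_letter_eqD by metis
qed

lemma inv_last_mem_act_zeta:
  assumes "w \<in> \<zeta>" "w \<noteq> []"
  shows "[inv_letter (last w)] \<in> act w \<zeta>"
proof -
  have "mult [inv_letter (last w)] w = butlast w"
    using mult_single[OF mem_zeta_reduced[OF assms(1)]] assms(2) by simp
  moreover have "butlast w \<in> \<zeta>" using convexD[OF convex_zeta assms(1)] by (simp add: butlast_conv_take)
  moreover have "fst (last w) \<in> A'" using zeta_FW assms last_in_set by (fastforce simp: FW_def)
  ultimately show ?thesis using single_mem_act_zeta_iff[OF assms(1)] by simp
qed

lemma snoc_mem_zeta:
  assumes "w @ [t] \<in> \<zeta>"
  shows "w \<in> \<zeta>" "[t] \<in> act w \<zeta>" "mult [t] w = w @ [t]"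
proof -
  show w: "w \<in> \<zeta>" using convexD[OF convex_zeta assms, of "length w"] by simp
  show m: "mult [t] w = w @ [t]" using mult_append_reduced mem_zeta_reduced[OF assms] by blast
  have "fst t \<in> A'" using zeta_FW assms by (auto simp: FW_def)
  then show "[t] \<in> act w \<zeta>" using w m single_mem_act_zeta_iff[OF w] assms by simp
qed

lemma reduced_proj_word: "w \<in> \<zeta> \<Longrightarrow> reduced (map base_letter w)"
proof (induction w rule: rev_induct)
  case (snoc t v)
  note v = snoc_mem_zeta[OF snoc.prems]
  have "base_letter t \<noteq> inv_letter (base_letter (last v))" if "v \<noteq> []"
  proof
    assume "base_letter t = inv_letter (base_letter (last v))"
    then have "t = inv_letter (last v)"
      using letter_eq_if_base_letter_eq[OF v(1,2) inv_last_mem_act_zeta[OF v(1) that]] by simp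
    then show False using mem_zeta_reduced[OF snoc.prems] that by (simp add: reduced_snoc)
  qed
  then show ?case using snoc.IH v(1) by (simp add: reduced_snoc last_map)
qed simp

lemma proj_word_inj:
  "w1 \<in> \<zeta> \<Longrightarrow> w2 \<in> \<zeta> \<Longrightarrow> map base_letter w1 = map base_letter w2 \<Longrightarrow> w1 = w2"
proof (induction w1 arbitrary: w2 rule: rev_induct)
  case (snoc t1 v1)
  obtain v2 t2 where w2: "w2 = v2 @ [t2]"
    using snoc.prems(3) by (metis Nil_is_map_conv rev_exhaust snoc_eq_iff_butlast)
  note v1 = snoc_mem_zeta[OF snoc.prems(1)] and v2 = snoc_mem_zeta[OF snoc.prems(2)[unfolded w2]]
  have "v1 = v2" using snoc.IH v1(1) v2(1) snoc.prems(3) w2 by simp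
  moreover have "t1 = t2" using letter_eq_if_base_letter_eq v1(1,2) v2(2) snoc.prems(3) w2 calculation by simp
  ultimately show ?case using w2 by simp
qed simp

lemma proj_word_mult_single:
  assumes w: "w \<in> \<zeta>" and t: "[t] \<in> act w \<zeta>"
  shows "map base_letter (mult [t] w) = mult [base_letter t] (map base_letter w)"
proof -
  have "w \<noteq> [] \<and> last w = inv_letter t \<longleftrightarrow>
      map base_letter w \<noteq> [] \<and> last (map base_letter w) = inv_letter (base_letter t)"
    using letter_eq_if_base_letter_eq[OF w inv_last_mem_act_zeta[OF w] t] by (auto simp: last_map)
  then show ?thesis
    using mult_single[OF mem_zeta_reduced[OF w], of t] mult_single[OF reduced_proj_word[OF w], of "base_letter t"]
    by (simp add: map_butlast)
qed

lemma proj_CC: "proj \<in> CC A"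
proof -
  have "map base_letter w \<in> FW A" if "w \<in> \<zeta>" for w
  proof -
    have "\<forall>t\<in>set w. fst t \<in> A'" using that zeta_FW by (auto simp: FW_def)
    then have "fst ` set (map base_letter w) \<subseteq> A" using base_in_A by (auto simp: base_letter_def)
    then show ?thesis using reduced_proj_word[OF that] by (simp add: FW_def)
  qed
  moreover have "convex proj" unfolding convex_def proj_def
    using convexD[OF convex_zeta] by (auto simp: take_map)
  moreover have "[] \<in> proj" unfolding proj_def using Nil_in_zeta by force
  ultimately show ?thesis unfolding CC_def proj_def by auto
qed

lemma proj_FW: "proj \<subseteq> FW A"
  using proj_CC CC_FW by blast

lemma first_letter_mem_witness:
  assumes w: "w \<in> \<zeta>" and "l # \<gamma> \<in> FW A" "mult (l # \<gamma>) (map base_letter w) \<in> proj"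
  shows "[l] \<in> witness w"
proof (cases "w \<noteq> [] \<and> base_letter (last w) = inv_letter l")
  case True
  then show ?thesis using witness_letter(1)[OF w inv_last_mem_act_zeta[OF w]] by simp
next
  case False
  let ?\<alpha> = "map base_letter w"
  have "reduced (?\<alpha> @ l # \<gamma>)"
    using False reduced_proj_word[OF w] FW_reduced[OF assms(2)] by (auto simp: reduced_append last_map)
  then have "?\<alpha> @ l # \<gamma> \<in> proj" using assms(3) by (simp add: mult_append_reduced)
  moreover have "convex proj" using proj_CC by (simp add: CC_def)
  ultimately have "take (Suc (length ?\<alpha>)) (?\<alpha> @ l # \<gamma>) \<in> proj"
    using convexD by blast
  then obtain w' where w': "w' \<in> \<zeta>" "map base_letter w' = ?\<alpha> @ [l]" unfolding proj_def by auto
  then obtain v t where "w' = v @ [t]" by (metis Nil_is_map_conv rev_exhaust snoc_eq_iff_butlast)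
  then have vt: "v @ [t] \<in> \<zeta>" "map base_letter v = ?\<alpha>" "base_letter t = l" using w' by auto
  then have "v = w" using proj_word_inj snoc_mem_zeta(1) w by blast
  then show ?thesis using witness_letter(1) snoc_mem_zeta(2)[OF vt(1)] vt(3) w by blast
qed

lemma step_along_witness_letter:
  assumes "w \<in> \<zeta>" "[l] \<in> witness w"
  obtains w' where "w' \<in> \<zeta>" "map base_letter w' = mult [l] (map base_letter w)"
    "trunc n (witness w') = trunc n (act [l] (witness w))"
proof
  define t where "t = sym_letter l (trunc n (act [l] (witness w))) (trunc n (witness w))"
  have t: "[t] \<in> act w \<zeta>" using single_mem_act_zeta_iff_witness[OF assms(1)] assms(2) t_def by blast
  then show "mult [t] w \<in> \<zeta>" using single_mem_act_zeta_iff[OF assms(1)] by blast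
  show "map base_letter (mult [t] w) = mult [l] (map base_letter w)"
    using proj_word_mult_single[OF assms(1) t] by (simp add: t_def)
  show "trunc n (witness (mult [t] w)) = trunc n (act [l] (witness w))"
    using witness_step[OF assms(1) t] by (simp add: t_def)
qed

lemma mem_witness_iff:
  "w \<in> \<zeta> \<Longrightarrow> \<gamma> \<in> FW A \<Longrightarrow> length \<gamma> \<le> n \<Longrightarrow> \<gamma> \<in> witness w \<longleftrightarrow> mult \<gamma> (map base_letter w) \<in> proj"
proof (induction \<gamma> arbitrary: w)
  case Nil
  then show ?case using witness_CC[OF Nil(1)] reduced_proj_word[OF Nil(1)] by (auto simp: CC_def proj_def)
next
  case (Cons l \<gamma>)
  note w = Cons.prems(1)
  have l: "[l] \<in> FW A" using Cons.prems(2) by (simp add: FW_def)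
  have \<gamma>: "\<gamma> \<in> FW A" "length \<gamma> \<le> n" using Cons.prems(2,3) FW_drop[of "l # \<gamma>" A 1] by simp_all
  have l\<gamma>: "mult \<gamma> [l] = l # \<gamma>"
    using mult_append_reduced[of "[l]" \<gamma>] Cons.prems(2) FW_reduced by fastforce
  have "l # \<gamma> \<in> witness w \<longleftrightarrow> mult (l # \<gamma>) (map base_letter w) \<in> proj" if l_mem: "[l] \<in> witness w"
  proof -
    obtain w' where w': "w' \<in> \<zeta>" "map base_letter w' = mult [l] (map base_letter w)"
      "trunc n (witness w') = trunc n (act [l] (witness w))"
      using step_along_witness_letter[OF w l_mem] .
    have "l # \<gamma> \<in> witness w \<longleftrightarrow> \<gamma> \<in> trunc n (act [l] (witness w))"
      using mem_act_iff[OF l witness_FW[OF w], of \<gamma>] \<gamma> l\<gamma> by (simp add: trunc_def)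
    also have "\<dots> \<longleftrightarrow> \<gamma> \<in> witness w'" using w'(3) \<gamma>(2) by (simp add: trunc_def set_eq_iff) blast
    also have "\<dots> \<longleftrightarrow> mult \<gamma> (mult [l] (map base_letter w)) \<in> proj" using Cons.IH[OF w'(1) \<gamma>] w'(2) by simp
    also have "mult \<gamma> (mult [l] (map base_letter w)) = mult (l # \<gamma>) (map base_letter w)"
      using mult_assoc[of \<gamma> "[l]"] FW_reduced[OF \<gamma>(1)] l\<gamma> by simp
    finally show ?thesis .
  qed
  moreover have "l # \<gamma> \<in> witness w \<Longrightarrow> [l] \<in> witness w"
    using convexD[of _ "l # \<gamma>" 1] witness_CC[OF w] by (simp add: CC_def)
  ultimately show ?case using first_letter_mem_witness[OF w Cons.prems(2)] by blast
qed

lemma trunc_act_proj_eq_witness: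
  assumes "w \<in> \<zeta>"
  shows "trunc n (act (map base_letter w) proj) = trunc n (witness w)"
proof -
  have "map base_letter w \<in> FW A" using assms proj_FW proj_def by blast
  then show ?thesis
    using mem_act_iff[OF _ proj_FW] mem_witness_iff[OF assms] witness_FW[OF assms]
    unfolding trunc_def by blast
qed

lemma phi_proj_word: "w \<in> \<zeta> \<Longrightarrow> phi n proj (map base_letter w) = w"
proof (induction w rule: rev_induct)
  case (snoc t v)
  note v = snoc_mem_zeta[OF snoc.prems]
  have "phi n proj (map base_letter (v @ [t])) =
      v @ [sym_letter (base_letter t) (trunc n (witness (v @ [t]))) (trunc n (witness v))]"
    using phi_snoc[of n proj "map base_letter v" "base_letter t"] snoc.IH v(1)
      trunc_act_proj_eq_witness[OF snoc.prems] trunc_act_proj_eq_witness[OF v(1)] by simp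
  also have "trunc n (witness (v @ [t])) = trunc n (act [base_letter t] (witness v))"
    using witness_step[OF v(1,2)] v(3) by simp
  finally show ?case using witness_letter(2)[OF v(1,2)] by simp
qed simp

lemma phi_set_proj: "phi_set n proj = \<zeta>"
proof -
  have "phi_set n proj = (\<lambda>w. phi n proj (map base_letter w)) ` \<zeta>"
    unfolding phi_set_def by (simp add: proj_def image_image)
  also have "\<dots> = \<zeta>" using phi_proj_word by simp
  finally show ?thesis .
qed

lemma balls_proj:
  assumes "\<beta> \<in> proj"
  shows "trunc R (act \<beta> proj) \<in> balls R \<Omega>"
proof -
  obtain w where w: "w \<in> \<zeta>" "\<beta> = map base_letter w" using assms proj_def by auto
  have "act w \<zeta> = phi_set n (act \<beta> proj)"
    using act_phi_phi_set[OF proj_FW assms, of n] phi_proj_word w phi_set_proj by simp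
  then have "trunc (R - n) (phi_set n (act \<beta> proj)) = ball_lift n R (trunc R (witness w))"
    using witness_spec[OF w(1)] ball_lift_trunc witness_FW[OF w(1)] n_less_R by (metis less_imp_le)
  then have "trunc R (act \<beta> proj) = trunc R (witness w)"
    using trunc_eq_iff_phi_set_trunc_eq[OF _ n_less_R act_CC[OF proj_CC assms]] witness_CC[OF w(1)]
    by (auto simp: balls_def)
  then show ?thesis using witness_spec[OF w(1)] by (simp add: balls_def)
qed

end

section \<open>Finite type of \<open>\<Omega>\<^sup>[\<^sup>n\<^sup>]\<close>\<close>

definition forbidden_balls :: "'b set \<Rightarrow> nat \<Rightarrow> 'b word set set \<Rightarrow> 'b word set set" where
  "forbidden_balls A m X = {B. is_ball A m B \<and> B \<notin> balls m X}"

lemma finite_FW_length_le: "finite A \<Longrightarrow> finite {u \<in> FW A. length u \<le> m}"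
proof (rule finite_subset)
  show "{u \<in> FW A. length u \<le> m} \<subseteq> {xs. set xs \<subseteq> A \<times> UNIV \<and> length xs \<le> m}"
    unfolding FW_def by force
qed (intro finite_lists_length_le; simp)

lemma finite_forbidden_balls:
  assumes "finite A"
  shows "finite (forbidden_balls A m X)"
proof (rule finite_subset)
  show "forbidden_balls A m X \<subseteq> Pow {u \<in> FW A. length u \<le> m}"
    unfolding forbidden_balls_def is_ball_def CC_def by blast
qed (simp add: finite_FW_length_le[OF assms])

lemma finite_sym_alph:
  assumes "finite A" "\<Omega> \<subseteq> CC A"
  shows "finite (sym_alph A n \<Omega>)"
proof (rule finite_subset)
  let ?W = "{u \<in> FW A. length u \<le> n}"
  show "sym_alph A n \<Omega> \<subseteq> Pow ?W \<times> A \<times> Pow ?W"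
  proof
    fix x assume "x \<in> sym_alph A n \<Omega>"
    then obtain \<xi> a where x: "x = (trunc n (act [(a, True)] \<xi>), a, trunc n \<xi>)"
      "\<xi> \<in> \<Omega>" "a \<in> A" unfolding sym_alph_def by blast
    have "\<xi> \<subseteq> FW A" using x(2) assms(2) CC_FW by blast
    moreover have "act [(a, True)] \<xi> \<subseteq> FW A"
      using act_subset_FW[OF FW_single calculation] x(3) by simp
    ultimately show "x \<in> Pow ?W \<times> A \<times> Pow ?W" using x(1,3) by (auto simp: trunc_def)
  qed
  show "finite (Pow ?W \<times> A \<times> Pow ?W)" using finite_FW_length_le[OF assms(1)] assms(1) by simp
qed

lemma trunc_CC: "\<xi> \<in> CC A \<Longrightarrow> trunc m \<xi> \<in> CC A"
  unfolding CC_def convex_def trunc_def by auto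

lemma subset_Omega_F_forbidden_balls:
  assumes "X \<subseteq> CC A" "invariant X"
  shows "X \<subseteq> Omega_F A m (forbidden_balls A m X)"
  using assms unfolding Omega_F_def avoids_def forbidden_balls_def invariant_def balls_def by blast

lemma Omega_F_forbidden_balls_balls:
  assumes "\<zeta> \<in> Omega_F A m (forbidden_balls A m X)" "w \<in> \<zeta>"
  shows "trunc m (act w \<zeta>) \<in> balls m X"
proof -
  have "\<zeta> \<in> CC A" using assms(1) by (simp add: Omega_F_def)
  then have "trunc m (act w \<zeta>) \<in> CC A" using act_CC assms(2) trunc_CC by blast
  then have "is_ball A m (trunc m (act w \<zeta>))" by (simp add: is_ball_def trunc_def)
  then show ?thesis
    using assms unfolding Omega_F_def avoids_def forbidden_balls_def by blast
qed

lemma invariant_ball_shift: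
  assumes "\<Omega> \<subseteq> CC A" "invariant \<Omega>"
  shows "invariant (ball_shift n \<Omega>)"
  unfolding invariant_def ball_shift_def
proof (intro ballI, elim imageE)
  fix \<zeta> w \<xi> assume \<xi>: "\<zeta> = phi_set n \<xi>" "\<xi> \<in> \<Omega>" and "w \<in> \<zeta>"
  then obtain \<beta> where "\<beta> \<in> \<xi>" "w = phi n \<xi> \<beta>" by (auto simp: phi_set_def)
  then show "act w \<zeta> \<in> phi_set n ` \<Omega>"
    using act_phi_phi_set[of \<xi> A \<beta> n] assms \<xi> CC_FW unfolding invariant_def by blast
qed

lemma R_step_ball_shift:
  assumes "finite A" "\<Omega> \<subseteq> CC A" "invariant \<Omega>" "n < R" "R_step A R \<Omega>"
  shows "R_step (sym_alph A n \<Omega>) (R - n) (ball_shift n \<Omega>)"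
proof -
  obtain Fs where Fs: "\<Omega> = Omega_F A R Fs" using assms(5) by (auto simp: R_step_def)
  define A' where "A' = sym_alph A n \<Omega>"
  let ?F = "forbidden_balls A' (R - n) (ball_shift n \<Omega>)"
  have "ball_shift n \<Omega> \<subseteq> CC A'"
    unfolding A'_def ball_shift_def using phi_set_CC[OF assms(2,3)] by blast
  then have "ball_shift n \<Omega> \<subseteq> Omega_F A' (R - n) ?F"
    by (rule subset_Omega_F_forbidden_balls[OF _ invariant_ball_shift[OF assms(2,3)]])
  moreover have "\<zeta> \<in> ball_shift n \<Omega>" if \<zeta>: "\<zeta> \<in> Omega_F A' (R - n) ?F" for \<zeta>
  proof -
    interpret ball_shift_reconstruction A \<Omega> n R A' \<zeta>
    proof
      show "\<Omega> \<subseteq> CC A" by (fact assms(2))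
      show "n < R" by (fact assms(4))
      show "fst (snd x) \<in> A" if "x \<in> A'" for x
        using that unfolding A'_def sym_alph_def by auto
      show "\<zeta> \<in> CC A'" using \<zeta> by (simp add: Omega_F_def)
      show "\<exists>\<theta>\<in>\<Omega>. trunc (R - n) (act w \<zeta>) = trunc (R - n) (phi_set n \<theta>)" if "w \<in> \<zeta>" for w
        using Omega_F_forbidden_balls_balls[OF \<zeta> that] unfolding balls_def ball_shift_def by auto
    qed
    have "proj \<in> \<Omega>" by (rule Omega_F_memI[OF Fs proj_CC balls_proj])
    then show ?thesis using phi_set_proj unfolding ball_shift_def by (metis image_eqI)
  qed
  ultimately have "ball_shift n \<Omega> = Omega_F A' (R - n) ?F" by blast
  moreover have "finite ?F"
    using finite_forbidden_balls finite_sym_alph[OF assms(1,2)] unfolding A'_def by blast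
  moreover have "\<forall>B\<in>?F. is_ball A' (R - n) B" by (simp add: forbidden_balls_def)
  ultimately show ?thesis unfolding R_step_def A'_def by blast
qed

theorem corollary3:
  fixes A :: "'a set" and \<Omega> :: "'a word set set" and n R :: nat
  assumes "finite A" and "convex_subshift A \<Omega>" and "1 \<le> n" and "1 \<le> R"
  shows "(\<forall>R' B \<xi>. B \<in> balls R' (CC A) \<longrightarrow> n < R' \<longrightarrow> \<xi> \<in> CC A \<longrightarrow>
            (trunc R' \<xi> = B \<longleftrightarrow> trunc (R' - n) (phi_set n \<xi>) = ball_lift n R' B))
       \<and> balls R (ball_shift n \<Omega>) = ball_lift n (R + n) ` balls (R + n) \<Omega>
       \<and> (R_step A R \<Omega> \<longrightarrow> n < R \<longrightarrow>
            R_step (sym_alph A n \<Omega>) (R - n) (ball_shift n \<Omega>))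
       \<and> (R_step A R \<Omega> \<longrightarrow> 1 \<le> R - 1 \<longrightarrow>
            R_step (sym_alph A (R - 1) \<Omega>) 1 (ball_shift (R - 1) \<Omega>))"
proof -
  have \<Omega>: "\<Omega> \<subseteq> CC A" "invariant \<Omega>" using assms(2) by (auto simp: convex_subshift_def)
  note step = R_step_ball_shift[OF assms(1) \<Omega>]
  have "\<forall>R' B \<xi>. B \<in> balls R' (CC A) \<longrightarrow> n < R' \<longrightarrow> \<xi> \<in> CC A \<longrightarrow>
      (trunc R' \<xi> = B \<longleftrightarrow> trunc (R' - n) (phi_set n \<xi>) = ball_lift n R' B)"
    using trunc_eq_iff_phi_set_trunc_eq by (intro allI impI)
  moreover have "balls R (ball_shift n \<Omega>) = ball_lift n (R + n) ` balls (R + n) \<Omega>"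
    by (rule balls_ball_shift[OF \<Omega>(1)])
  moreover have "R_step A R \<Omega> \<longrightarrow> n < R \<longrightarrow> R_step (sym_alph A n \<Omega>) (R - n) (ball_shift n \<Omega>)"
    using step by blast
  moreover have "R - 1 < R" "R - (R - 1) = 1" using assms(4) by auto
  then have "R_step A R \<Omega> \<longrightarrow> 1 \<le> R - 1 \<longrightarrow>
      R_step (sym_alph A (R - 1) \<Omega>) 1 (ball_shift (R - 1) \<Omega>)"
    using step[of "R - 1" R] by simp
  ultimately show ?thesis by (intro conjI)
qed

end
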